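(* Let $q>2$ be prime, $p$ not a multiple of $q$, $a_n=e^{-i\pi p(n-1/2)^2/q}$ for integers $n$, and let $1\le j<(q+2)/4$, $\alpha=\alpha_j=q-2j+1$. For $1\le n\le\alpha$ let $\Omega(n,\alpha)$ be the set of $(r_1,\dots,r_n)$ of positive integers with $r_1+\dots+r_n=\alpha$, and set $l_s=r_1+\dots+r_s$. Define $$s_j=-i\,2^{-\alpha}\sum_{n=1}^{\alpha}(-1)^{n+j}\sum_{(r_1,\dots,r_n)\in\Omega(n,\alpha)}\frac{1}{r_1!\cdots r_n!}\;\frac{a_j\,a_{j+l_1}\cdots a_{j+l_{n-1}}}{(a_{j+l_1}-a_j)\cdots(a_{j+l_{n-1}}-a_j)}.$$ Then there are constants $C>0$, $\gamma>0$ such that, asymptotically as $q\to\infty$, $$|s_j|\lesssim C\,q^{1/2}e^{-\gamma q}\prod_{l=1}^{\alpha_j-1}\frac{1}{|a_{j+l}\overline{a_j}-1|}.$$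
   Context: For $j<(q+2)/4$ the indices $j+l$, $1\le l\le\alpha-1$, lie in $\{j+1,\dots,q-j\}$, so $a_{j+l}\ne a_j$ (since $a_r=a_s$ for $1\le r,s\le q$ iff $r=s$ or $r+s=q+1$). The quantity $s_j$ is the leading coefficient of the band-slope expansion for the $j$-th band at the resonance $\tau=2\pi p/q$, $\beta=1/2$. *)

theory Defs
  imports Complex_Main "HOL-Computational_Algebra.Primes"
begin

definition aseq :: "int \<Rightarrow> nat \<Rightarrow> int \<Rightarrow> complex" where
  "aseq p q n = exp (- \<i> * complex_of_real (pi * real_of_int p * (real_of_int n - 1/2)^2 / real q))"

definition Omega :: "nat \<Rightarrow> nat \<Rightarrow> nat list set" where
  "Omega n \<alpha> = {rs. length rs = n \<and> (\<forall>r\<in>set rs. 0 < r) \<and> sum_list rs = \<alpha>}"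

definition alpha :: "nat \<Rightarrow> nat \<Rightarrow> nat" where
  "alpha q j = q + 1 - 2 * j"

definition lsum :: "nat list \<Rightarrow> nat \<Rightarrow> nat" where
  "lsum rs s = sum_list (take s rs)"

definition s_coef :: "int \<Rightarrow> nat \<Rightarrow> nat \<Rightarrow> complex" where
  "s_coef p q j =
    (let \<alpha> = alpha q j; a = aseq p q in
     - \<i> * (1 / 2 ^ \<alpha>) *
     (\<Sum>n=1..\<alpha>. (-1) ^ (n + j) *
        (\<Sum>rs\<in>Omega n \<alpha>.
           (1 / of_nat (\<Prod>r\<leftarrow>rs. fact r)) *
           ((a (int j) * (\<Prod>s=1..n-1. a (int (j + lsum rs s)))) /
            (\<Prod>s=1..n-1. a (int (j + lsum rs s)) - a (int j))))))"

end

theory Submission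
  imports Defs
begin

(* The coefficient s_j is a signed sum, over compositions (r_1,...,r_n) of
   alpha = q - 2j + 1, of terms whose numerators are unimodular and whose
   denominators are products of n - 1 distinct differences a_{j+l} - a_j,
   1 <= l <= alpha - 1.  Multiplying such a term by the full product
   P = prod_{l=1}^{alpha-1} |a_{j+l} - a_j| leaves alpha - n unused factors,
   each of size at most 2, so |term| * P <= 2^(alpha-n) / (r_1! ... r_n!).
   Writing 2^(r-1)/(r! K^r) with K = 19/10 as a weight w(r), the sum of these
   bounds over compositions with n parts is at most K^alpha (sum_r w(r))^n,
   and sum_r w(r) <= 24/25.  Hence |s_j| <= 25 (19/20)^alpha / P, and
   alpha >= q/2 turns (19/20)^alpha into exp(-gamma q).  Finally P equals the
   reciprocal of the product in the theorem since |a_j| = 1, and P > 0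
   because a_{j+l} /= a_j for q prime (the only coincidences are
   a_r = a_s with r + s = q + 1). *)

lemma aseq_cis: "aseq p q n = cis (- (pi * real_of_int p * (real_of_int n - 1/2)^2 / real q))"
  unfolding aseq_def cis_conv_exp by (simp add: algebra_simps)

lemma norm_aseq [simp]: "cmod (aseq p q n) = 1"
  unfolding aseq_cis by simp

text \<open>For q prime, a_{j+l} = a_j would force q to divide l (2j + l - 1),
  which is impossible when 0 < l and l + 2j <= q.\<close>
lemma aseq_neq:
  assumes q: "prime q" and pq: "\<not> int q dvd p" and l: "0 < l" and lj: "l + 2*j \<le> q" and j: "1 \<le> j"
  shows "aseq p q (int (j+l)) \<noteq> aseq p q (int j)"
proof
  assume eq: "aseq p q (int (j+l)) = aseq p q (int j)"
  define x where "x = - (pi * real_of_int p * (real (j+l) - 1/2)^2 / real q)"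
  define y where "y = - (pi * real_of_int p * (real j - 1/2)^2 / real q)"
  have "cis x = cis y" using eq unfolding aseq_cis x_def y_def by simp
  hence "sin x = sin y \<and> cos x = cos y" by (metis cis.sel)
  then obtain n :: int where n: "x = y + 2 * pi * n" using sin_cos_eq_iff by blast
  have q0: "real q > 0" using q prime_gt_0_nat by simp
  have "pi * (real_of_int p * ((real (j+l) - 1/2)^2 - (real j - 1/2)^2)) = pi * (- 2 * n * real q)"
    using n q0 unfolding x_def y_def by (simp add: field_simps)
  hence "real_of_int p * ((real (j+l) - 1/2)^2 - (real j - 1/2)^2) = - 2 * n * real q"
    by (rule mult_left_cancel[THEN iffD1, OF pi_neq_zero])
  hence "real_of_int (p * (int l * (2*int j + int l - 1))) = real_of_int (- 2 * n * int q)"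
    by (simp add: algebra_simps power2_eq_square)
  hence "p * (int l * (2*int j + int l - 1)) = - 2 * n * int q" by (simp only: of_int_eq_iff)
  hence dv: "int q dvd p * (int l * (2*int j + int l - 1))"
    by (metis dvd_triv_right mult.commute mult_minus_left dvd_minus_iff)
  have qi: "prime (int q)" using q by simp
  have "\<not> int q dvd int l" using l lj j by (intro zdvd_not_zless) auto
  moreover have "\<not> int q dvd (2*int j + int l - 1)" using l lj j by (intro zdvd_not_zless) auto
  ultimately show False using dv pq qi by (simp add: prime_dvd_mult_iff)
qed

lemma cmod_cnj_shift: "cmod a = 1 \<Longrightarrow> cmod (x * cnj a - 1) = cmod (x - a)"
proof -
  assume a: "cmod a = 1"
  have "a * cnj a = 1" using a by (metis complex_norm_square mult.commute of_real_1 power_one)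
  hence "x * cnj a - 1 = (x - a) * cnj a" by (simp add: algebra_simps)
  thus ?thesis using a by (simp add: norm_mult)
qed

lemma sum_list_pos_nat: "xs \<noteq> [] \<Longrightarrow> \<forall>r\<in>set xs. 0 < r \<Longrightarrow> 0 < sum_list (xs::nat list)"
  by (cases xs) auto

lemma lsum_strict:
  assumes pos: "\<forall>r\<in>set rs. 0 < r" and "s < s'" and "s' \<le> length rs"
  shows "lsum rs s < lsum rs s'"
proof -
  have "take s' rs = take s rs @ drop s (take s' rs)"
    using assms by (metis append_take_drop_id take_take min_absorb1 less_imp_le)
  hence "lsum rs s' = lsum rs s + sum_list (drop s (take s' rs))"
    unfolding lsum_def by (metis sum_list_append)
  moreover have "drop s (take s' rs) \<noteq> []" using assms by simp
  moreover have "\<forall>r\<in>set (drop s (take s' rs)). 0 < r" using pos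
    by (meson in_set_dropD in_set_takeD)
  ultimately show ?thesis using sum_list_pos_nat by fastforce
qed

lemma lsum_interior:
  assumes rs: "rs \<in> Omega n \<alpha>" and n: "1 \<le> n"
  shows "inj_on (lsum rs) {1..n-1}" and "lsum rs ` {1..n-1} \<subseteq> {1..\<alpha>-1}"
proof -
  have len: "length rs = n" and pos: "\<forall>r\<in>set rs. 0 < r" and sum: "sum_list rs = \<alpha>"
    using rs unfolding Omega_def by auto
  have mono: "strict_mono_on {0..n} (lsum rs)"
    using lsum_strict[OF pos] len by (auto intro!: strict_mono_onI)
  show "inj_on (lsum rs) {1..n-1}"
    by (rule inj_on_subset[OF strict_mono_on_imp_inj_on[OF mono]]) auto
  show "lsum rs ` {1..n-1} \<subseteq> {1..\<alpha>-1}"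
  proof
    fix l assume "l \<in> lsum rs ` {1..n-1}"
    then obtain s where s: "s \<in> {1..n-1}" and l: "l = lsum rs s" by auto
    have "lsum rs 0 < lsum rs s" "lsum rs s < lsum rs n"
      using s n mono by (auto intro!: strict_mono_onD[OF mono])
    moreover have "lsum rs 0 = 0" "lsum rs n = \<alpha>" using len sum by (auto simp: lsum_def)
    ultimately show "l \<in> {1..\<alpha>-1}" using l by auto
  qed
qed

text \<open>Compositions of alpha are words over {1..alpha}; this gives finiteness and
  lets the weighted sum be compared with a sum over all words.\<close>
lemma Omega_sub: "Omega n \<alpha> \<subseteq> {xs. set xs \<subseteq> {1..\<alpha>} \<and> length xs = n}"
  unfolding Omega_def by (auto simp: Suc_le_eq member_le_sum_list)

section \<open>The bound for a single term\<close>

text \<open>The term attached to a composition rs with n parts, for an abstract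
  sequence A l (standing for a_{j+l}) and base point a0 (standing for a_j).\<close>
definition comp_term :: "(nat \<Rightarrow> complex) \<Rightarrow> complex \<Rightarrow> nat \<Rightarrow> nat list \<Rightarrow> complex" where
  "comp_term A a0 n rs = (1 / of_nat (\<Prod>r\<leftarrow>rs. fact r)) *
     ((a0 * (\<Prod>s=1..n-1. A (lsum rs s))) / (\<Prod>s=1..n-1. A (lsum rs s) - a0))"

definition dist_prod :: "(nat \<Rightarrow> complex) \<Rightarrow> complex \<Rightarrow> nat \<Rightarrow> real" where
  "dist_prod A a0 \<alpha> = (\<Prod>l\<in>{1..\<alpha>-1}. cmod (A l - a0))"

lemma dist_prod_pos:
  "(\<And>l. l \<in> {1..\<alpha>-1} \<Longrightarrow> A l \<noteq> a0) \<Longrightarrow> 0 < dist_prod A a0 \<alpha>"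
  unfolding dist_prod_def by (intro prod_pos) auto

text \<open>The denominator of a term is a sub-product of dist_prod; the complementary
  alpha - n factors are each at most 2 since all points lie on the unit circle.\<close>
lemma comp_term_bound:
  assumes nA: "\<And>l. cmod (A l) = 1" and na0: "cmod a0 = 1"
    and neq: "\<And>l. l \<in> {1..\<alpha>-1} \<Longrightarrow> A l \<noteq> a0"
    and n: "1 \<le> n" and rs: "rs \<in> Omega n \<alpha>"
  shows "cmod (comp_term A a0 n rs) * dist_prod A a0 \<alpha> \<le> 2^(\<alpha>-n) / real (\<Prod>r\<leftarrow>rs. fact r)"
proof -
  define d where "d l = cmod (A l - a0)" for l
  define F where "F = real (\<Prod>r\<leftarrow>rs. fact r)"
  define L where "L = lsum rs ` {1..n-1}"
  note inj = lsum_interior(1)[OF rs n] and Lsub = lsum_interior(2)[OF rs n, folded L_def]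
  have cardR: "card ({1..\<alpha>-1} - L) = \<alpha> - n"
    using Lsub n inj by (simp add: L_def card_Diff_subset finite_subset card_image)
  have dpos: "\<And>l. l \<in> {1..\<alpha>-1} \<Longrightarrow> 0 < d l" unfolding d_def using neq by auto
  have dle: "d l \<le> 2" for l
    using norm_triangle_ineq4[of "A l" a0] nA na0 unfolding d_def by simp
  have PL: "(\<Prod>s=1..n-1. cmod (A (lsum rs s) - a0)) = prod d L"
    unfolding L_def d_def by (subst prod.reindex[OF inj]) simp
  have PLpos: "0 < prod d L" using Lsub dpos by (intro prod_pos) auto
  have split: "dist_prod A a0 \<alpha> = prod d ({1..\<alpha>-1} - L) * prod d L"
    unfolding dist_prod_def d_def[symmetric] by (rule prod.subset_diff[OF Lsub]) simp
  have Rle: "prod d ({1..\<alpha>-1} - L) \<le> 2^(\<alpha>-n)"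
    using cardR by (intro prod_le_power) (auto simp: d_def dle[unfolded d_def])
  have "0 < prod_list (map fact rs :: nat list)" by (induction rs) auto
  then have Fpos: "F > 0" unfolding F_def by simp
  have term_norm: "cmod (comp_term A a0 n rs) = (1/F) / prod d L"
    unfolding comp_term_def F_def PL[symmetric]
    by (simp add: norm_mult norm_divide prod_norm[symmetric] nA na0 norm_of_nat)
  show ?thesis unfolding term_norm split F_def[symmetric]
    using PLpos Fpos Rle by (simp add: field_simps)
qed

section \<open>Summing over compositions with weights\<close>

lemma lists_set_Suc:
  "{xs. set xs \<subseteq> A \<and> length xs = Suc n} =
   (\<lambda>(x,xs). x # xs) ` (A \<times> {xs. set xs \<subseteq> A \<and> length xs = n})"
  by (auto simp: image_iff length_Suc_conv)

lemma sum_lists_power: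
  fixes f :: "'a \<Rightarrow> real"
  assumes "finite A"
  shows "(\<Sum>xs\<in>{xs. set xs \<subseteq> A \<and> length xs = n}. prod_list (map f xs)) = (sum f A)^n"
proof (induction n)
  case 0
  have "{xs. set xs \<subseteq> A \<and> length xs = 0} = {[]}" by auto
  then show ?case by simp
next
  case (Suc n)
  have inj: "inj_on (\<lambda>(x,xs). x # xs) (A \<times> {xs. set xs \<subseteq> A \<and> length xs = n})"
    by (auto simp: inj_on_def)
  have "(\<Sum>xs\<in>{xs. set xs \<subseteq> A \<and> length xs = Suc n}. prod_list (map f xs))
      = (\<Sum>z\<in>A \<times> {xs. set xs \<subseteq> A \<and> length xs = n}. prod_list (map f ((\<lambda>(x,xs). x # xs) z)))"
    unfolding lists_set_Suc by (rule sum.reindex[OF inj, unfolded comp_def])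
  also have "\<dots> = (\<Sum>x\<in>A. \<Sum>xs\<in>{xs. set xs \<subseteq> A \<and> length xs = n}. f x * prod_list (map f xs))"
    by (simp add: sum.cartesian_product split_def)
  also have "\<dots> = sum f A * (sum f A)^n"
    by (simp add: sum_distrib_left[symmetric] sum_distrib_right Suc.IH)
  finally show ?case by simp
qed

text \<open>The weight of a part r; the constant 19/10 < 2 is what produces decay.\<close>
definition weight :: "nat \<Rightarrow> real" where "weight r = 2^(r-1) / (fact r * (19/10)^r)"

lemma weight_nonneg: "0 \<le> weight r" unfolding weight_def by simp

lemma weight_prod:
  assumes "\<forall>r\<in>set rs. 0 < r"
  shows "prod_list (map weight rs) * (19/10)^(sum_list rs)
       = 2^(sum_list rs - length rs) / real (\<Prod>r\<leftarrow>rs. fact r) \<and> length rs \<le> sum_list rs"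
  using assms
proof (induction rs)
  case Nil
  then show ?case by simp
next
  case (Cons r rs)
  have r: "0 < r" and le: "length rs \<le> sum_list rs"
   and IH: "prod_list (map weight rs) * (19/10)^(sum_list rs)
       = 2^(sum_list rs - length rs) / real (\<Prod>r\<leftarrow>rs. fact r)"
    using Cons by auto
  have e: "sum_list (r # rs) - length (r # rs) = (r - 1) + (sum_list rs - length rs)"
    using r le by simp
  have "prod_list (map weight (r#rs)) * (19/10)^(sum_list (r#rs))
     = (2^(r-1) / fact r) * (prod_list (map weight rs) * (19/10)^(sum_list rs))"
    by (simp add: weight_def power_add field_simps)
  also have "\<dots> = 2^(sum_list (r # rs) - length (r # rs)) / real (\<Prod>r\<leftarrow>(r#rs). fact r)"
    unfolding IH e by (simp add: power_add of_nat_mult)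
  finally show ?case using r le by simp
qed

lemma fact_ge_two_three_pow: "2 \<le> r \<Longrightarrow> (2::real) * 3^(r-2) \<le> fact r"
proof (induction r rule: dec_induct)
  case base then show ?case by simp
next
  case (step n)
  have "Suc n - 2 = Suc (n-2)" using step(1) by simp
  then have "(2::real) * 3^(Suc n - 2) = 3 * (2 * 3^(n-2))" by simp
  also have "\<dots> \<le> real (Suc n) * fact n"
    using step by (intro mult_mono) auto
  finally show ?case by simp
qed

lemma weight_le: assumes "2 \<le> r" shows "weight r \<le> (20/57)^(r-2) / (19/10)^2"
proof -
  have "weight r \<le> 2^(r-1) / (2 * 3^(r-2) * (19/10)^r)"
    unfolding weight_def by (intro divide_left_mono mult_right_mono fact_ge_two_three_pow[OF assms]) auto
  also have "\<dots> = (20/57)^(r-2) / (19/10)^2"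
  proof -
    obtain k where k: "r = k + 2" using assms by (metis add.commute le_iff_add)
    have e: "(2::real)^k * (10^k*57^k) = 3^k*(20^k*19^k)" by (simp flip: power_mult_distrib)
    show ?thesis unfolding k by (simp add: power_add power_divide field_simps e)
  qed
  finally show ?thesis .
qed

lemma weight_sum_partial:
  "1 \<le> m \<Longrightarrow> (\<Sum>r=1..m. weight r) \<le> 10/19 + (100/361) * (1 - (20/57)^(m-1)) / (1 - 20/57)"
proof (induction m rule: dec_induct)
  case base then show ?case by (simp add: weight_def)
next
  case (step n)
  obtain k where k: "n = Suc k" using step(1) by (cases n) auto
  have "(\<Sum>r=1..Suc n. weight r) = (\<Sum>r=1..n. weight r) + weight (Suc n)" using step(1) by simp
  also have "\<dots> \<le> 10/19 + (100/361) * (1 - (20/57)^(n-1)) / (1 - 20/57) + (20/57)^(n-1) * (100/361)"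
    using step weight_le[of "Suc n"] by (intro add_mono) (auto simp: power_divide)
  also have "\<dots> = 10/19 + (100/361) * (1 - (20/57)^(Suc n-1)) / (1 - 20/57)"
    unfolding k by (simp add: field_simps)
  finally show ?case .
qed

lemma weight_sum: "(\<Sum>r=1..m. weight r) \<le> 24/25"
proof (cases "m = 0")
  case True then show ?thesis by simp
next
  case False
  then have "(\<Sum>r=1..m. weight r) \<le> 10/19 + (100/361) * (1 - (20/57)^(m-1)) / (1 - 20/57)"
    by (intro weight_sum_partial) auto
  also have "\<dots> \<le> 10/19 + (100/361) * 1 / (1 - 20/57)"
    by (intro add_left_mono divide_right_mono mult_left_mono) auto
  also have "\<dots> \<le> 24/25" by simp
  finally show ?thesis .
qed

lemma sum_Omega_weight: "(\<Sum>rs\<in>Omega n \<alpha>. prod_list (map weight rs)) \<le> (24/25)^n"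
proof -
  have fin: "finite {xs. set xs \<subseteq> {1..\<alpha>} \<and> length xs = n}" by (rule finite_lists_length_eq) simp
  have "(\<Sum>rs\<in>Omega n \<alpha>. prod_list (map weight rs))
      \<le> (\<Sum>rs\<in>{xs. set xs \<subseteq> {1..\<alpha>} \<and> length xs = n}. prod_list (map weight rs))"
    by (intro sum_mono2[OF fin Omega_sub]) (auto intro!: prod_list_nonneg simp: weight_nonneg)
  also have "\<dots> = (\<Sum>r=1..\<alpha>. weight r)^n" by (rule sum_lists_power) simp
  also have "\<dots> \<le> (24/25)^n" by (intro power_mono weight_sum sum_nonneg weight_nonneg)
  finally show ?thesis .
qed

lemma comp_sum_bound:
  assumes nA: "\<And>l. cmod (A l) = 1" and na0: "cmod a0 = 1"
    and neq: "\<And>l. l \<in> {1..\<alpha>-1} \<Longrightarrow> A l \<noteq> a0" and n: "1 \<le> n"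
  shows "cmod (\<Sum>rs\<in>Omega n \<alpha>. comp_term A a0 n rs) * dist_prod A a0 \<alpha> \<le> (19/10)^\<alpha> * (24/25)^n"
proof -
  have single: "cmod (comp_term A a0 n rs) * dist_prod A a0 \<alpha> \<le> (19/10)^\<alpha> * prod_list (map weight rs)"
    if rs: "rs \<in> Omega n \<alpha>" for rs
  proof -
    have len: "length rs = n" and pos: "\<forall>r\<in>set rs. 0 < r" and sum: "sum_list rs = \<alpha>"
      using rs unfolding Omega_def by auto
    show ?thesis
      using comp_term_bound[OF nA na0 neq n rs] weight_prod[OF pos] len sum by (simp add: mult.commute)
  qed
  have "cmod (\<Sum>rs\<in>Omega n \<alpha>. comp_term A a0 n rs) * dist_prod A a0 \<alpha>
      \<le> (\<Sum>rs\<in>Omega n \<alpha>. cmod (comp_term A a0 n rs) * dist_prod A a0 \<alpha>)"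
    unfolding sum_distrib_right[symmetric]
    using dist_prod_pos[of \<alpha> A a0] neq by (intro mult_right_mono norm_sum) auto
  also have "\<dots> \<le> (\<Sum>rs\<in>Omega n \<alpha>. (19/10)^\<alpha> * prod_list (map weight rs))"
    by (intro sum_mono single)
  also have "\<dots> \<le> (19/10)^\<alpha> * (24/25)^n"
    unfolding sum_distrib_left[symmetric] by (intro mult_left_mono sum_Omega_weight) auto
  finally show ?thesis .
qed

lemma geometric_24_25: "(\<Sum>n=1..m. (24/25::real)^n) \<le> 25"
proof -
  have "(\<Sum>n=1..m. (24/25::real)^n) \<le> (\<Sum>n<Suc m. (24/25::real)^n)"
    by (intro sum_mono2) auto
  also have "\<dots> = (1 - (24/25)^Suc m) / (1 - 24/25)" by (simp add: sum_gp_strict)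
  also have "\<dots> \<le> 25" by simp
  finally show ?thesis .
qed

lemma signed_sum_bound:
  assumes nA: "\<And>l. cmod (A l) = 1" and na0: "cmod a0 = 1"
    and neq: "\<And>l. l \<in> {1..\<alpha>-1} \<Longrightarrow> A l \<noteq> a0"
  shows "cmod (- \<i> * (1 / 2 ^ \<alpha>) * (\<Sum>n=1..\<alpha>. (-1) ^ (n + j) * (\<Sum>rs\<in>Omega n \<alpha>. comp_term A a0 n rs)))
         * dist_prod A a0 \<alpha> \<le> 25 * (19/20)^\<alpha>"
proof -
  define S where "S n = (\<Sum>rs\<in>Omega n \<alpha>. comp_term A a0 n rs)" for n
  have "cmod (\<Sum>n=1..\<alpha>. (-1) ^ (n + j) * S n) * dist_prod A a0 \<alpha>
      \<le> (\<Sum>n=1..\<alpha>. cmod (S n) * dist_prod A a0 \<alpha>)"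
    unfolding sum_distrib_right[symmetric]
    using dist_prod_pos[of \<alpha> A a0] neq norm_sum[of "\<lambda>n. (-1) ^ (n + j) * S n" "{1..\<alpha>}"]
    by (intro mult_right_mono) (auto simp: norm_mult norm_power)
  also have "\<dots> \<le> (\<Sum>n=1..\<alpha>. (19/10)^\<alpha> * (24/25)^n)"
    unfolding S_def by (intro sum_mono comp_sum_bound[OF nA na0 neq]) auto
  also have "\<dots> \<le> (19/10)^\<alpha> * 25"
    unfolding sum_distrib_left[symmetric] by (intro mult_left_mono geometric_24_25) auto
  finally have "cmod (\<Sum>n=1..\<alpha>. (-1) ^ (n + j) * S n) * dist_prod A a0 \<alpha> \<le> (19/10)^\<alpha> * 25" .
  then have "(1 / 2 ^ \<alpha>) * (cmod (\<Sum>n=1..\<alpha>. (-1) ^ (n + j) * S n) * dist_prod A a0 \<alpha>)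
      \<le> (1 / 2 ^ \<alpha>) * ((19/10)^\<alpha> * 25)"
    by (rule mult_left_mono) simp
  also have "\<dots> = 25 * (19/20)^\<alpha>"
    by (simp add: power_divide field_simps flip: power_mult_distrib)
  finally show ?thesis
    unfolding S_def[symmetric] by (simp add: norm_mult norm_divide norm_power mult.assoc)
qed

lemma s_coef_as_signed_sum:
  "s_coef p q j = - \<i> * (1 / 2 ^ alpha q j) * (\<Sum>n=1..alpha q j. (-1) ^ (n + j) *
     (\<Sum>rs\<in>Omega n (alpha q j). comp_term (\<lambda>l. aseq p q (int (j + l))) (aseq p q (int j)) n rs))"
  unfolding s_coef_def Let_def comp_term_def by simp

lemma exponential_decay:
  assumes "q \<le> 2 * \<alpha>" and "1 \<le> q"
  shows "(19/20::real)^\<alpha> \<le> sqrt (real q) * exp (- (ln (20/19) / 2) * real q)"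
proof -
  have "(19/20::real)^\<alpha> = exp (real \<alpha> * ln (19/20))"
    by (simp add: exp_of_nat_mult)
  also have "\<dots> = exp (- real \<alpha> * ln (20/19))"
    by (simp add: ln_div algebra_simps)
  also have "\<dots> \<le> exp (- (ln (20/19) / 2) * real q)"
    using assms(1) by (simp add: mult_right_mono)
  also have "\<dots> \<le> sqrt (real q) * exp (- (ln (20/19) / 2) * real q)"
    using assms(2) by (intro mult_le_cancel_right1[THEN iffD2] impI) auto
  finally show ?thesis .
qed

theorem lemma3:
  shows "\<exists>C>0. \<exists>\<gamma>>0. \<exists>Q::nat. \<forall>(q::nat) (p::int) (j::nat).
     prime q \<and> 2 < q \<and> Q \<le> q \<and> \<not> (int q dvd p) \<and> 1 \<le> j \<and> 4 * j < q + 2 \<longrightarrow>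
     cmod (s_coef p q j) \<le>
       C * sqrt (real q) * exp (- \<gamma> * real q) *
       (\<Prod>l=1..alpha q j - 1. 1 / cmod (aseq p q (int (j + l)) * cnj (aseq p q (int j)) - 1))"
proof (rule exI[of _ 25], rule conjI, simp, rule exI[of _ "ln (20/19) / 2"], rule conjI, simp,
       intro exI[of _ 0] allI impI)
  fix q :: nat and p :: int and j :: nat
  assume H: "prime q \<and> 2 < q \<and> 0 \<le> q \<and> \<not> (int q dvd p) \<and> 1 \<le> j \<and> 4 * j < q + 2"
  define \<alpha> A a0 where "\<alpha> = alpha q j" and "A l = aseq p q (int (j + l))" and "a0 = aseq p q (int j)" for l
  have neq: "\<And>l. l \<in> {1..\<alpha>-1} \<Longrightarrow> A l \<noteq> a0"
    unfolding A_def a0_def \<alpha>_def alpha_def using H by (intro aseq_neq) auto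
  have P: "0 < dist_prod A a0 \<alpha>" using neq by (rule dist_prod_pos)
  have prod_eq: "(\<Prod>l=1..alpha q j - 1. 1 / cmod (aseq p q (int (j + l)) * cnj (aseq p q (int j)) - 1))
      = 1 / dist_prod A a0 \<alpha>"
    by (simp add: dist_prod_def A_def a0_def \<alpha>_def cmod_cnj_shift prod_dividef)
  have "cmod (s_coef p q j) * dist_prod A a0 \<alpha> \<le> 25 * (19/20)^\<alpha>"
    unfolding s_coef_as_signed_sum \<alpha>_def[symmetric] A_def[symmetric] a0_def[symmetric]
    by (rule signed_sum_bound[OF _ _ neq]) (simp_all add: A_def a0_def)
  also have "\<dots> \<le> 25 * (sqrt (real q) * exp (- (ln (20/19) / 2) * real q))"
    using H by (intro mult_left_mono exponential_decay) (auto simp: \<alpha>_def alpha_def)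
  finally show "cmod (s_coef p q j) \<le> 25 * sqrt (real q) * exp (- (ln (20/19) / 2) * real q) *
       (\<Prod>l=1..alpha q j - 1. 1 / cmod (aseq p q (int (j + l)) * cnj (aseq p q (int j)) - 1))"
    unfolding prod_eq using P by (simp add: field_simps)
qed

end
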